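(* Let $\Omega=[0,1]$ (Lebesgue measure) or $\mathbb{N}$ (counting measure), $\mathbb{K}=\mathbb{R}$ or $\mathbb{C}$, and let $\Phi,\Psi$ be N-functions with $\Phi,\Psi\in\Delta_2^\Omega$, $\Phi\in\mathcal{K}(p_\Phi,q_\Phi)$ and $\Psi\in\mathcal{K}(p_\Psi,q_\Psi)$ for some $0<p_\Phi\le q_\Phi<\infty$, $0<p_\Psi\le q_\Psi<\infty$. Set $\alpha=p_\Phi/q_\Psi$ and $\beta=q_\Phi/p_\Psi$. Then for every $f\in L^\Phi(\Omega,\mathbb{K})$, $$\min\{\|f\|_{(\Phi)}^\alpha,\|f\|_{(\Phi)}^\beta\}\le\|\phi_{\Phi\Psi}(f)\|_{(\Psi)}\le\max\{\|f\|_{(\Phi)}^\alpha,\|f\|_{(\Phi)}^\beta\}.$$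
   Context: N-function: convex $\Phi:[0,\infty)\to[0,\infty)$, $\Phi(0)=0$, $0<\Phi(t)<\infty$ for $t>0$, $\Phi(t)/t\to0$ as $t\to0$ and $\to\infty$ as $t\to\infty$. $\Phi\in\Delta_2^\Omega$: there are $K,t_0>0$ with $\Phi(2t)\le K\Phi(t)$ for $t\ge t_0$ if $\Omega=[0,1]$ (for $0<t\le t_0$ if $\Omega=\mathbb{N}$). For $0<a\le b<\infty$, a non-decreasing continuous $\varphi:[0,\infty)\to[0,\infty)$ with $\varphi(0)=0$ is in $\mathcal{K}(a,b)$ if $\varphi(t)/t^a$ is non-decreasing and $\varphi(t)/t^b$ is non-increasing on $t>0$. $L^\Phi(\Omega,\mathbb{K})$ with gauge norm $\|f\|_{(\Phi)}=\inf\{b>0:\int_\Omega\Phi(|f|/b)d\mu\le1\}$. Generalized Mazur map: $\phi_{\Phi\Psi}(f)=\Psi^{-1}(\Phi(|f|))\,\mathrm{sign}(f)$, with $\mathrm{sign}(f)(x)=f(x)/|f(x)|$ where $f(x)\neq0$. *)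

theory Defs
  imports "HOL-Analysis.Analysis"
begin

definition N_function :: "(real \<Rightarrow> real) \<Rightarrow> bool" where
  "N_function \<Phi> \<longleftrightarrow>
     convex_on {0..} \<Phi> \<and> \<Phi> 0 = 0 \<and> (\<forall>t>0. 0 < \<Phi> t) \<and>
     ((\<lambda>t. \<Phi> t / t) \<longlongrightarrow> 0) (at_right 0) \<and>
     filterlim (\<lambda>t. \<Phi> t / t) at_top at_top"

definition delta2_infty :: "(real \<Rightarrow> real) \<Rightarrow> bool" where
  "delta2_infty \<Phi> \<longleftrightarrow> (\<exists>K t0. K > 0 \<and> t0 > 0 \<and> (\<forall>t\<ge>t0. \<Phi> (2*t) \<le> K * \<Phi> t))"

definition delta2_zero :: "(real \<Rightarrow> real) \<Rightarrow> bool" where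
  "delta2_zero \<Phi> \<longleftrightarrow> (\<exists>K t0. K > 0 \<and> t0 > 0 \<and> (\<forall>t. 0 < t \<and> t \<le> t0 \<longrightarrow> \<Phi> (2*t) \<le> K * \<Phi> t))"

definition class_K :: "real \<Rightarrow> real \<Rightarrow> (real \<Rightarrow> real) \<Rightarrow> bool" where
  "class_K a b \<phi> \<longleftrightarrow>
     mono_on {0..} \<phi> \<and> continuous_on {0..} \<phi> \<and> \<phi> 0 = 0 \<and> (\<forall>t\<ge>0. 0 \<le> \<phi> t) \<and>
     mono_on {0<..} (\<lambda>t. \<phi> t / t powr a) \<and>
     antimono_on {0<..} (\<lambda>t. \<phi> t / t powr b)"

definition orlicz_modular :: "'a measure \<Rightarrow> (real \<Rightarrow> real) \<Rightarrow> ('a \<Rightarrow> 'k::real_normed_vector) \<Rightarrow> ennreal" where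
  "orlicz_modular M \<Phi> f = (\<integral>\<^sup>+ x. ennreal (\<Phi> (norm (f x))) \<partial>M)"

definition orlicz_space :: "'a measure \<Rightarrow> (real \<Rightarrow> real) \<Rightarrow> ('a \<Rightarrow> 'k::real_normed_vector) set" where
  "orlicz_space M \<Phi> = {f \<in> borel_measurable M.
      \<exists>c>0. orlicz_modular M \<Phi> (\<lambda>x. inverse c *\<^sub>R f x) < \<infinity>}"

definition gauge_norm :: "'a measure \<Rightarrow> (real \<Rightarrow> real) \<Rightarrow> ('a \<Rightarrow> 'k::real_normed_vector) \<Rightarrow> real" where
  "gauge_norm M \<Phi> f = Inf {b. b > 0 \<and> orlicz_modular M \<Phi> (\<lambda>x. inverse b *\<^sub>R f x) \<le> 1}"

definition Ninv :: "(real \<Rightarrow> real) \<Rightarrow> real \<Rightarrow> real" where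
  "Ninv \<Psi> = the_inv_into {0..} \<Psi>"

text \<open>Generalized Mazur map: Psi^{-1}(Phi(|f|)) sign(f), sign(f) = f/|f| (= sgn, 0 where f = 0).\<close>
definition mazur_map :: "(real \<Rightarrow> real) \<Rightarrow> (real \<Rightarrow> real) \<Rightarrow> ('a \<Rightarrow> 'k::real_normed_vector) \<Rightarrow> 'a \<Rightarrow> 'k" where
  "mazur_map \<Phi> \<Psi> f = (\<lambda>x. Ninv \<Psi> (\<Phi> (norm (f x))) *\<^sub>R sgn (f x))"

end

theory Submission
  imports Defs
begin

(* The growth conditions of the class K(p,q) give phi (l * t) <= max (l^p) (l^q) * phi t for l > 0.
   Applied to Psi and to Phi, they show that Psi s = Phi t implies
   Psi (s / max (c^alpha) (c^beta)) <= Phi (t / c) for every c > 0.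
   Since |phi_{Phi Psi}(f)| = Psi^-1 (Phi |f|), integration turns this into: if c lies in the
   unit-ball set defining the gauge norm of f, then max (c^alpha) (c^beta) lies in the one of
   phi_{Phi Psi}(f); letting c decrease to the gauge norm of f gives the upper bound.
   The same argument with Phi and Psi exchanged (the exponents become 1/beta and 1/alpha)
   bounds the gauge norm of f by that of phi_{Phi Psi}(f), which is the lower bound. *)

lemma class_K_shrink:
  assumes K: "class_K p q \<phi>" and t: "0 \<le> t" and l: "0 < l" "l \<le> 1"
  shows "\<phi> (l * t) \<le> l powr p * \<phi> t"
proof (cases "t = 0")
  case True
  with K show ?thesis by (simp add: class_K_def)
next
  case False
  with t l have lt: "0 < t" "0 < l * t" "l * t \<le> t" by (auto simp: mult_le_cancel_right1)
  have "mono_on {0<..} (\<lambda>t. \<phi> t / t powr p)"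
    using K by (simp add: class_K_def)
  from mono_onD[OF this, of "l * t" t] lt
  have "\<phi> (l * t) / (l * t) powr p \<le> \<phi> t / t powr p" by simp
  then have "\<phi> (l * t) \<le> (l powr p * t powr p) * (\<phi> t / t powr p)"
    using lt l by (simp add: powr_mult divide_le_eq mult.commute)
  with lt show ?thesis by simp
qed

lemma class_K_stretch:
  assumes K: "class_K p q \<phi>" and t: "0 \<le> t" and l: "1 \<le> l"
  shows "l powr p * \<phi> t \<le> \<phi> (l * t)" and "\<phi> (l * t) \<le> l powr q * \<phi> t"
proof -
  have "l powr p * \<phi> t \<le> \<phi> (l * t) \<and> \<phi> (l * t) \<le> l powr q * \<phi> t"
  proof (cases "t = 0")
    case True
    with K show ?thesis by (simp add: class_K_def)
  next
    case False
    with t l have lt: "0 < t" "0 < l * t" "t \<le> l * t" by auto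
    have "mono_on {0<..} (\<lambda>t. \<phi> t / t powr p)" "antimono_on {0<..} (\<lambda>t. \<phi> t / t powr q)"
      using K by (simp_all add: class_K_def)
    from mono_onD[OF this(1), of t "l * t"] monotone_onD[OF this(2), of t "l * t"] lt
    have "\<phi> t / t powr p \<le> \<phi> (l * t) / (l * t) powr p"
      and "\<phi> (l * t) / (l * t) powr q \<le> \<phi> t / t powr q" by simp_all
    then have "(l powr p * t powr p) * (\<phi> t / t powr p) \<le> \<phi> (l * t)"
      and "\<phi> (l * t) \<le> (l powr q * t powr q) * (\<phi> t / t powr q)"
      using lt l by (simp_all add: powr_mult divide_le_eq le_divide_eq mult.commute)
    with lt show ?thesis by simp
  qed
  then show "l powr p * \<phi> t \<le> \<phi> (l * t)" and "\<phi> (l * t) \<le> l powr q * \<phi> t" by auto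
qed

lemma class_K_scale_le_max:
  assumes K: "class_K p q \<phi>" and t: "0 \<le> t" and l: "0 < l"
  shows "\<phi> (l * t) \<le> max (l powr p) (l powr q) * \<phi> t"
proof -
  have "0 \<le> \<phi> t" using K t by (simp add: class_K_def)
  then have "l powr p * \<phi> t \<le> max (l powr p) (l powr q) * \<phi> t"
    and "l powr q * \<phi> t \<le> max (l powr p) (l powr q) * \<phi> t"
    by (simp_all add: mult_right_mono)
  then show ?thesis
    using class_K_shrink[OF K t l] class_K_stretch(2)[OF K t, of l] by (cases "l \<le> 1") auto
qed

lemma class_K_strict_mono_on:
  assumes K: "class_K p q \<phi>" and p: "0 < p" and pos: "\<And>t. 0 < t \<Longrightarrow> 0 < \<phi> t"
  shows "strict_mono_on {0..} \<phi>"
proof (rule strict_mono_onI)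
  fix s t :: real assume "s \<in> {0..}" "s < t"
  show "\<phi> s < \<phi> t"
  proof (cases "s = 0")
    case True
    with K pos \<open>s < t\<close> show ?thesis by (simp add: class_K_def)
  next
    case False
    with \<open>s \<in> {0..}\<close> \<open>s < t\<close> have "0 < s" "1 < t / s" by auto
    then have "1 < (t / s) powr p" and "0 < \<phi> s"
      using p pos by (auto intro: gr_one_powr)
    then have "\<phi> s < (t / s) powr p * \<phi> s" by simp
    also have "\<dots> \<le> \<phi> (t / s * s)"
      using class_K_stretch(1)[OF K, of s "t / s"] \<open>0 < s\<close> \<open>1 < t / s\<close> by simp
    finally show ?thesis using \<open>0 < s\<close> by simp
  qed
qed

lemma class_K_surj_on:
  assumes K: "class_K p q \<phi>" and p: "0 < p" and pos: "0 < \<phi> 1" and u: "0 \<le> u"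
  shows "u \<in> \<phi> ` {0..}"
proof -
  define l where "l = (u / \<phi> 1 + 1) powr (1 / p)"
  have "1 \<le> u / \<phi> 1 + 1" using u pos by simp
  then have "1 \<le> l" and "l powr p = u / \<phi> 1 + 1"
    using p by (simp_all add: l_def ge_one_powr_ge_zero powr_powr)
  then have "u \<le> \<phi> l"
    using class_K_stretch(1)[OF K, of 1 l] pos by (simp add: field_simps)
  moreover have "\<phi> 0 = 0" and "continuous_on {0..l} \<phi>"
    using K by (auto simp: class_K_def intro: continuous_on_subset)
  ultimately obtain x where "0 \<le> x" "x \<le> l" "\<phi> x = u"
    using IVT'[of \<phi> 0 u l] u \<open>1 \<le> l\<close> by auto
  then show ?thesis by auto
qed

lemma class_K_Ninv:
  assumes K: "class_K p q \<Psi>" and p: "0 < p" and pos: "\<And>t. 0 < t \<Longrightarrow> 0 < \<Psi> t"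
    and u: "0 \<le> u"
  shows "0 \<le> Ninv \<Psi> u" and "\<Psi> (Ninv \<Psi> u) = u"
proof -
  have inj: "inj_on \<Psi> {0..}"
    using class_K_strict_mono_on[OF K p pos] by (rule strict_mono_on_imp_inj_on)
  have "u \<in> \<Psi> ` {0..}" using class_K_surj_on[OF K p _ u] pos by simp
  then show "0 \<le> Ninv \<Psi> u" and "\<Psi> (Ninv \<Psi> u) = u"
    using the_inv_into_into[OF inj] f_the_inv_into_f[OF inj] by (auto simp: Ninv_def)
qed

lemma class_K_Ninv_zero:
  assumes K: "class_K p q \<Psi>" and p: "0 < p" and pos: "\<And>t. 0 < t \<Longrightarrow> 0 < \<Psi> t"
  shows "Ninv \<Psi> 0 = 0"
  using class_K_Ninv[OF K p pos, of 0] pos[of "Ninv \<Psi> 0"] by (auto simp: le_less)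

lemma norm_mazur_map:
  assumes K\<Phi>: "class_K p\<Phi> q\<Phi> \<Phi>" and K\<Psi>: "class_K p\<Psi> q\<Psi> \<Psi>" and p\<Psi>: "0 < p\<Psi>"
    and pos: "\<And>t. 0 < t \<Longrightarrow> 0 < \<Psi> t"
  shows "norm (mazur_map \<Phi> \<Psi> f x) = Ninv \<Psi> (\<Phi> (norm (f x)))"
proof (cases "f x = 0")
  case True
  with K\<Phi> show ?thesis
    by (simp add: mazur_map_def class_K_def class_K_Ninv_zero[OF K\<Psi> p\<Psi> pos])
next
  case False
  have "0 \<le> \<Phi> (norm (f x))" using K\<Phi> by (simp add: class_K_def)
  with False show ?thesis
    by (simp add: mazur_map_def norm_sgn class_K_Ninv(1)[OF K\<Psi> p\<Psi> pos])
qed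

lemma max_powr_le_min_powr:
  fixes c :: real
  assumes c: "0 < c" and p\<Phi>: "0 < p\<Phi>" "p\<Phi> \<le> q\<Phi>" and p\<Psi>: "0 < p\<Psi>" "p\<Psi> \<le> q\<Psi>"
  defines "b \<equiv> max (c powr (p\<Phi> / q\<Psi>)) (c powr (q\<Phi> / p\<Psi>))"
  shows "max (c powr p\<Phi>) (c powr q\<Phi>) \<le> min (b powr p\<Psi>) (b powr q\<Psi>)"
proof (cases "1 \<le> c")
  case True
  have "c powr (p\<Phi> / q\<Psi>) \<le> c powr (q\<Phi> / p\<Psi>)"
    using True p\<Phi> p\<Psi> by (intro powr_mono frac_le) auto
  then have "b = c powr (q\<Phi> / p\<Psi>)" by (simp add: b_def)
  then have "1 \<le> b" and "b powr p\<Psi> = c powr q\<Phi>"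
    using True p\<Phi> p\<Psi> by (simp_all add: ge_one_powr_ge_zero powr_powr)
  moreover have "c powr p\<Phi> \<le> c powr q\<Phi>" and "b powr p\<Psi> \<le> b powr q\<Psi>"
    using True \<open>1 \<le> b\<close> p\<Phi> p\<Psi> by (simp_all add: powr_mono)
  ultimately show ?thesis by simp
next
  case False
  have "c powr (q\<Phi> / p\<Psi>) \<le> c powr (p\<Phi> / q\<Psi>)"
    using False c p\<Phi> p\<Psi> by (intro powr_mono' frac_le) auto
  then have "b = c powr (p\<Phi> / q\<Psi>)" by (simp add: b_def)
  then have "0 < b" "b \<le> 1" and "b powr q\<Psi> = c powr p\<Phi>"
    using False c p\<Phi> p\<Psi> by (simp_all add: powr_le1 powr_powr)
  moreover have "c powr q\<Phi> \<le> c powr p\<Phi>" and "b powr q\<Psi> \<le> b powr p\<Psi>"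
    using False c \<open>0 < b\<close> \<open>b \<le> 1\<close> p\<Phi> p\<Psi> by (simp_all add: powr_mono')
  ultimately show ?thesis by simp
qed

lemma class_K_exchange:
  assumes K\<Phi>: "class_K p\<Phi> q\<Phi> \<Phi>" and K\<Psi>: "class_K p\<Psi> q\<Psi> \<Psi>"
    and p\<Phi>: "0 < p\<Phi>" "p\<Phi> \<le> q\<Phi>" and p\<Psi>: "0 < p\<Psi>" "p\<Psi> \<le> q\<Psi>"
    and t: "0 \<le> t" and s: "0 \<le> s" and st: "\<Psi> s = \<Phi> t" and c: "0 < c"
  defines "b \<equiv> max (c powr (p\<Phi> / q\<Psi>)) (c powr (q\<Phi> / p\<Psi>))"
  shows "\<Psi> (s / b) \<le> \<Phi> (t / c)"
proof -
  define M where "M = max (c powr p\<Phi>) (c powr q\<Phi>)"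
  have b: "0 < b" using c by (simp add: b_def less_max_iff_disj)
  have M: "0 < M" "M \<le> b powr p\<Psi>" "M \<le> b powr q\<Psi>"
    using c max_powr_le_min_powr[OF c p\<Phi> p\<Psi>] by (auto simp: M_def b_def less_max_iff_disj)
  have "\<Psi> (s / b) \<le> max (inverse b powr p\<Psi>) (inverse b powr q\<Psi>) * \<Psi> s"
    using class_K_scale_le_max[OF K\<Psi> s, of "inverse b"] b by (simp add: divide_inverse mult.commute)
  also have "\<dots> \<le> inverse M * \<Phi> t"
  proof (rule mult_mono)
    show "max (inverse b powr p\<Psi>) (inverse b powr q\<Psi>) \<le> inverse M"
      using M by (simp add: inverse_powr le_imp_inverse_le)
    show "0 \<le> \<Psi> s" using K\<Psi> s by (simp add: class_K_def)
  qed (use st M in simp_all)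
  also have "\<dots> \<le> \<Phi> (t / c)"
  proof -
    have "\<Phi> t \<le> M * \<Phi> (t / c)"
      using class_K_scale_le_max[OF K\<Phi> _ c, of "t / c"] t c by (simp add: M_def)
    with M show ?thesis by (simp add: field_simps)
  qed
  finally show ?thesis .
qed

lemma orlicz_modular_inverse_scaleR:
  fixes f :: "'a \<Rightarrow> 'k::real_normed_vector"
  assumes "0 < b"
  shows "orlicz_modular M \<Phi> (\<lambda>x. inverse b *\<^sub>R f x) = (\<integral>\<^sup>+x. ennreal (\<Phi> (norm (f x) / b)) \<partial>M)"
  unfolding orlicz_modular_def using assms by (simp add: divide_inverse mult.commute)

lemma orlicz_modular_exchange:
  fixes f :: "'a \<Rightarrow> 'k::real_normed_vector" and g :: "'a \<Rightarrow> 'l::real_normed_vector"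
  assumes K\<Phi>: "class_K p\<Phi> q\<Phi> \<Phi>" and K\<Psi>: "class_K p\<Psi> q\<Psi> \<Psi>"
    and p\<Phi>: "0 < p\<Phi>" "p\<Phi> \<le> q\<Phi>" and p\<Psi>: "0 < p\<Psi>" "p\<Psi> \<le> q\<Psi>"
    and fg: "\<And>x. \<Psi> (norm (g x)) = \<Phi> (norm (f x))" and c: "0 < c"
  shows "orlicz_modular M \<Psi> (\<lambda>x. inverse (max (c powr (p\<Phi> / q\<Psi>)) (c powr (q\<Phi> / p\<Psi>))) *\<^sub>R g x)
           \<le> orlicz_modular M \<Phi> (\<lambda>x. inverse c *\<^sub>R f x)"
proof -
  have b: "0 < max (c powr (p\<Phi> / q\<Psi>)) (c powr (q\<Phi> / p\<Psi>))"
    using c by (simp add: less_max_iff_disj)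
  show ?thesis
    unfolding orlicz_modular_inverse_scaleR[OF c] orlicz_modular_inverse_scaleR[OF b]
    by (intro nn_integral_mono ennreal_leI class_K_exchange[OF K\<Phi> K\<Psi> p\<Phi> p\<Psi> _ _ fg c]) auto
qed

lemma orlicz_modular_antimono:
  fixes f :: "'a \<Rightarrow> 'k::real_normed_vector"
  assumes mono: "mono_on {0..} \<Phi>" and "0 < b" "b \<le> c"
  shows "orlicz_modular M \<Phi> (\<lambda>x. inverse c *\<^sub>R f x) \<le> orlicz_modular M \<Phi> (\<lambda>x. inverse b *\<^sub>R f x)"
proof -
  have "0 < c" using assms by simp
  with assms show ?thesis
    unfolding orlicz_modular_inverse_scaleR[OF \<open>0 < b\<close>] orlicz_modular_inverse_scaleR[OF \<open>0 < c\<close>]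
    by (intro nn_integral_mono ennreal_leI mono_onD[OF mono]) (auto intro: frac_le)
qed

lemma orlicz_space_unit_ball:
  fixes f :: "'a \<Rightarrow> 'k::real_normed_vector"
  assumes K: "class_K p q \<Phi>" and p: "0 < p" and f: "f \<in> orlicz_space M \<Phi>"
  shows "\<exists>b>0. orlicz_modular M \<Phi> (\<lambda>x. inverse b *\<^sub>R f x) \<le> 1"
proof -
  obtain c where c: "0 < c" and fm: "f \<in> borel_measurable M"
    and fin: "orlicz_modular M \<Phi> (\<lambda>x. inverse c *\<^sub>R f x) < \<infinity>"
    using f unfolding orlicz_space_def by auto
  define F where "F = (\<lambda>x. ennreal (\<Phi> (norm (f x) / c)))"
  have "(\<lambda>x. norm (f x) / c) \<in> measurable M (restrict_space borel {0..})"
    using fm c by (intro measurable_restrict_space2) auto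
  moreover have "\<Phi> \<in> borel_measurable (restrict_space borel {0..})"
    using K by (intro borel_measurable_continuous_on_restrict) (simp add: class_K_def)
  ultimately have "(\<lambda>x. \<Phi> (norm (f x) / c)) \<in> borel_measurable M"
    by (rule measurable_compose)
  then have F_meas: "F \<in> borel_measurable M" unfolding F_def by measurable
  obtain r where r: "integral\<^sup>N M F = ennreal r" "0 \<le> r"
    using fin orlicz_modular_inverse_scaleR[OF c, of M \<Phi> f]
    by (cases "integral\<^sup>N M F") (auto simp: F_def)
  define l where "l = (1 / (r + 1)) powr (1 / p)"
  have l: "0 < l" "l \<le> 1" "l powr p = 1 / (r + 1)"
    using r p by (simp_all add: l_def powr_le1 powr_powr)
  have b: "0 < c / l" using c l by simp
  have "orlicz_modular M \<Phi> (\<lambda>x. inverse (c / l) *\<^sub>R f x) \<le> (\<integral>\<^sup>+x. ennreal (l powr p) * F x \<partial>M)"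
    unfolding orlicz_modular_inverse_scaleR[OF b]
  proof (intro nn_integral_mono)
    fix x
    have "\<Phi> (norm (f x) / (c / l)) \<le> l powr p * \<Phi> (norm (f x) / c)"
      using class_K_shrink[OF K _ l(1,2), of "norm (f x) / c"] c by (simp add: mult.commute)
    moreover have "0 \<le> \<Phi> (norm (f x) / c)" using K c by (simp add: class_K_def)
    ultimately show "ennreal (\<Phi> (norm (f x) / (c / l))) \<le> ennreal (l powr p) * F x"
      by (simp add: F_def ennreal_mult[symmetric] ennreal_leI)
  qed
  also have "\<dots> = ennreal (r / (r + 1))"
    using nn_integral_cmult[OF F_meas] r l by (simp add: ennreal_mult[symmetric])
  also have "\<dots> \<le> 1" using r by simp
  finally show ?thesis using b by blast
qed

lemma gauge_norm_nonneg:
  assumes "\<exists>b>0. orlicz_modular M \<Phi> (\<lambda>x. inverse b *\<^sub>R f x) \<le> 1"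
  shows "0 \<le> gauge_norm M \<Phi> f"
  using assms unfolding gauge_norm_def by (intro cInf_greatest) auto

lemma gauge_norm_le_of_modular_le:
  fixes f :: "'a \<Rightarrow> 'k::real_normed_vector" and g :: "'a \<Rightarrow> 'l::real_normed_vector"
  assumes mono: "mono_on {0..} \<Phi>"
    and ball: "\<exists>b>0. orlicz_modular M \<Phi> (\<lambda>x. inverse b *\<^sub>R f x) \<le> 1"
    and h: "continuous_on {0..} h" "\<And>c. 0 < c \<Longrightarrow> 0 < h c"
    and le: "\<And>c. 0 < c \<Longrightarrow>
      orlicz_modular M \<Psi> (\<lambda>x. inverse (h c) *\<^sub>R g x) \<le> orlicz_modular M \<Phi> (\<lambda>x. inverse c *\<^sub>R f x)"
  shows "gauge_norm M \<Psi> g \<le> h (gauge_norm M \<Phi> f)"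
proof -
  define S where "S = {b. 0 < b \<and> orlicz_modular M \<Phi> (\<lambda>x. inverse b *\<^sub>R f x) \<le> 1}"
  define T where "T = {b. 0 < b \<and> orlicz_modular M \<Psi> (\<lambda>x. inverse b *\<^sub>R g x) \<le> 1}"
  define a where "a = gauge_norm M \<Phi> f"
  have a: "a = Inf S" "0 \<le> a"
    using gauge_norm_nonneg[OF ball] by (simp_all add: a_def S_def gauge_norm_def)
  have "S \<noteq> {}" using ball by (auto simp: S_def)
  have in_S: "c \<in> S" if ac: "a < c" for c
  proof -
    obtain b where "b \<in> S" "b < c" using cInf_lessD[OF \<open>S \<noteq> {}\<close>, of c] ac a by auto
    with orlicz_modular_antimono[OF mono, of b c M f] show ?thesis by (auto simp: S_def)
  qed
  have Inf_T_le: "Inf T \<le> h c" if "a < c" for c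
  proof (rule cInf_lower)
    have "0 < c" using a that by simp
    with in_S[OF that] le[of c] h(2)[of c] show "h c \<in> T"
      by (auto simp: S_def T_def intro: order_trans)
    show "bdd_below T" by (auto simp: T_def intro: bdd_belowI[of _ 0])
  qed
  have "\<forall>\<^sub>F c in at_right a. Inf T \<le> h c"
    using eventually_at_right_real[OF less_add_one[of a]] by eventually_elim (simp add: Inf_T_le)
  moreover have "(h \<longlongrightarrow> h a) (at_right a)"
    using h(1) a(2) by (auto simp: continuous_on_def intro: tendsto_within_subset)
  ultimately have "Inf T \<le> h a"
    using trivial_limit_at_right_real[of a]
    by (intro tendsto_lowerbound[of h]) (simp_all add: trivial_limit_def)
  then show ?thesis by (simp add: T_def gauge_norm_def a_def)
qed

lemma min_powr_le_of_le_max_powr: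
  fixes a b x y :: real
  assumes "0 \<le> a" "0 \<le> b" "0 < x" "0 < y" "a \<le> max (b powr inverse x) (b powr inverse y)"
  shows "min (a powr x) (a powr y) \<le> b"
proof -
  have "a powr z \<le> b" if "0 < z" "a \<le> b powr inverse z" for z
  proof -
    have "a powr z \<le> (b powr inverse z) powr z"
      using that assms(1) by (intro powr_mono2) auto
    also have "\<dots> = b" using that assms(2) by (simp add: powr_powr)
    finally show ?thesis .
  qed
  with assms show ?thesis by (auto simp: le_max_iff_disj min_le_iff_disj)
qed

lemma continuous_on_max_powr:
  fixes x y :: real
  assumes "0 < x" "0 < y"
  shows "continuous_on {0..} (\<lambda>c::real. max (c powr x) (c powr y))"
  using assms by (intro continuous_on_max continuous_on_powr') (auto intro: continuous_intros)

lemma gauge_norm_mazur_map_bounds: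
  fixes f :: "'a \<Rightarrow> 'k::real_normed_vector"
  assumes K\<Phi>: "class_K p\<Phi> q\<Phi> \<Phi>" and K\<Psi>: "class_K p\<Psi> q\<Psi> \<Psi>"
    and p\<Phi>: "0 < p\<Phi>" "p\<Phi> \<le> q\<Phi>" and p\<Psi>: "0 < p\<Psi>" "p\<Psi> \<le> q\<Psi>"
    and pos: "\<And>t. 0 < t \<Longrightarrow> 0 < \<Psi> t" and f: "f \<in> orlicz_space M \<Phi>"
  defines "\<alpha> \<equiv> p\<Phi> / q\<Psi>" and "\<beta> \<equiv> q\<Phi> / p\<Psi>"
  shows "min (gauge_norm M \<Phi> f powr \<alpha>) (gauge_norm M \<Phi> f powr \<beta>) \<le> gauge_norm M \<Psi> (mazur_map \<Phi> \<Psi> f)"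
    and "gauge_norm M \<Psi> (mazur_map \<Phi> \<Psi> f) \<le> max (gauge_norm M \<Phi> f powr \<alpha>) (gauge_norm M \<Phi> f powr \<beta>)"
proof -
  let ?g = "mazur_map \<Phi> \<Psi> f"
  have fg: "\<Psi> (norm (?g x)) = \<Phi> (norm (f x))" for x
  proof -
    have "0 \<le> \<Phi> (norm (f x))" using K\<Phi> by (simp add: class_K_def)
    then show ?thesis
      by (simp add: norm_mazur_map[OF K\<Phi> K\<Psi> p\<Psi>(1) pos] class_K_Ninv(2)[OF K\<Psi> p\<Psi>(1) pos])
  qed
  have mono: "mono_on {0..} \<Phi>" "mono_on {0..} \<Psi>" using K\<Phi> K\<Psi> by (simp_all add: class_K_def)
  have h_pos: "0 < max (c powr x) (c powr y)" if "0 < c" for c x y :: real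
    using that by (simp add: less_max_iff_disj)
  have \<alpha>\<beta>: "0 < \<alpha>" "0 < \<beta>" using p\<Phi> p\<Psi> by (simp_all add: \<alpha>_def \<beta>_def)
  have ball_f: "\<exists>b>0. orlicz_modular M \<Phi> (\<lambda>x. inverse b *\<^sub>R f x) \<le> 1"
    using orlicz_space_unit_ball[OF K\<Phi> p\<Phi>(1) f] .
  have up: "orlicz_modular M \<Psi> (\<lambda>x. inverse (max (c powr \<alpha>) (c powr \<beta>)) *\<^sub>R ?g x)
      \<le> orlicz_modular M \<Phi> (\<lambda>x. inverse c *\<^sub>R f x)" if "0 < c" for c
    unfolding \<alpha>_def \<beta>_def using orlicz_modular_exchange[OF K\<Phi> K\<Psi> p\<Phi> p\<Psi> fg that] .
  have down: "orlicz_modular M \<Phi> (\<lambda>x. inverse (max (b powr inverse \<beta>) (b powr inverse \<alpha>)) *\<^sub>R f x)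
      \<le> orlicz_modular M \<Psi> (\<lambda>x. inverse b *\<^sub>R ?g x)" if "0 < b" for b
    unfolding \<alpha>_def \<beta>_def inverse_divide
    using orlicz_modular_exchange[OF K\<Psi> K\<Phi> p\<Psi> p\<Phi> fg[symmetric] that] .
  have "gauge_norm M \<Psi> ?g \<le> (\<lambda>c. max (c powr \<alpha>) (c powr \<beta>)) (gauge_norm M \<Phi> f)"
    by (rule gauge_norm_le_of_modular_le[OF mono(1) ball_f continuous_on_max_powr[OF \<alpha>\<beta>] h_pos up])
  then show "gauge_norm M \<Psi> ?g \<le> max (gauge_norm M \<Phi> f powr \<alpha>) (gauge_norm M \<Phi> f powr \<beta>)"
    by simp
  have ball_g: "\<exists>b>0. orlicz_modular M \<Psi> (\<lambda>x. inverse b *\<^sub>R ?g x) \<le> 1"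
  proof -
    obtain c where "0 < c" "orlicz_modular M \<Phi> (\<lambda>x. inverse c *\<^sub>R f x) \<le> 1"
      using ball_f by blast
    with up[of c] h_pos[of c] show ?thesis by (blast intro: order_trans)
  qed
  have "gauge_norm M \<Phi> f \<le> (\<lambda>b. max (b powr inverse \<beta>) (b powr inverse \<alpha>)) (gauge_norm M \<Psi> ?g)"
    using \<alpha>\<beta> by (intro gauge_norm_le_of_modular_le[OF mono(2) ball_g _ h_pos down] continuous_on_max_powr)
      simp_all
  with min_powr_le_of_le_max_powr[OF gauge_norm_nonneg[OF ball_f] gauge_norm_nonneg[OF ball_g] \<alpha>\<beta>(2,1)]
  show "min (gauge_norm M \<Phi> f powr \<alpha>) (gauge_norm M \<Phi> f powr \<beta>) \<le> gauge_norm M \<Psi> ?g"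
    by (simp add: min.commute)
qed

theorem mainTheorem8:
  fixes \<Phi> \<Psi> :: "real \<Rightarrow> real" and p\<Phi> q\<Phi> p\<Psi> q\<Psi> :: real
  assumes "N_function \<Phi>" and "N_function \<Psi>"
    and "0 < p\<Phi>" and "p\<Phi> \<le> q\<Phi>" and "0 < p\<Psi>" and "p\<Psi> \<le> q\<Psi>"
    and "class_K p\<Phi> q\<Phi> \<Phi>" and "class_K p\<Psi> q\<Psi> \<Psi>"
  defines "\<alpha> \<equiv> p\<Phi> / q\<Psi>" and "\<beta> \<equiv> q\<Phi> / p\<Psi>"
  shows
   "(delta2_infty \<Phi> \<and> delta2_infty \<Psi> \<longrightarrow>
      (\<forall>f :: real \<Rightarrow> real. f \<in> orlicz_space (lebesgue_on {0..1}) \<Phi> \<longrightarrow>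
         min (gauge_norm (lebesgue_on {0..1}) \<Phi> f powr \<alpha>) (gauge_norm (lebesgue_on {0..1}) \<Phi> f powr \<beta>)
           \<le> gauge_norm (lebesgue_on {0..1}) \<Psi> (mazur_map \<Phi> \<Psi> f) \<and>
         gauge_norm (lebesgue_on {0..1}) \<Psi> (mazur_map \<Phi> \<Psi> f)
           \<le> max (gauge_norm (lebesgue_on {0..1}) \<Phi> f powr \<alpha>) (gauge_norm (lebesgue_on {0..1}) \<Phi> f powr \<beta>)) \<and>
      (\<forall>f :: real \<Rightarrow> complex. f \<in> orlicz_space (lebesgue_on {0..1}) \<Phi> \<longrightarrow>
         min (gauge_norm (lebesgue_on {0..1}) \<Phi> f powr \<alpha>) (gauge_norm (lebesgue_on {0..1}) \<Phi> f powr \<beta>)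
           \<le> gauge_norm (lebesgue_on {0..1}) \<Psi> (mazur_map \<Phi> \<Psi> f) \<and>
         gauge_norm (lebesgue_on {0..1}) \<Psi> (mazur_map \<Phi> \<Psi> f)
           \<le> max (gauge_norm (lebesgue_on {0..1}) \<Phi> f powr \<alpha>) (gauge_norm (lebesgue_on {0..1}) \<Phi> f powr \<beta>)))
    \<and>
    (delta2_zero \<Phi> \<and> delta2_zero \<Psi> \<longrightarrow>
      (\<forall>f :: nat \<Rightarrow> real. f \<in> orlicz_space (count_space UNIV) \<Phi> \<longrightarrow>
         min (gauge_norm (count_space UNIV) \<Phi> f powr \<alpha>) (gauge_norm (count_space UNIV) \<Phi> f powr \<beta>)
           \<le> gauge_norm (count_space UNIV) \<Psi> (mazur_map \<Phi> \<Psi> f) \<and>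
         gauge_norm (count_space UNIV) \<Psi> (mazur_map \<Phi> \<Psi> f)
           \<le> max (gauge_norm (count_space UNIV) \<Phi> f powr \<alpha>) (gauge_norm (count_space UNIV) \<Phi> f powr \<beta>)) \<and>
      (\<forall>f :: nat \<Rightarrow> complex. f \<in> orlicz_space (count_space UNIV) \<Phi> \<longrightarrow>
         min (gauge_norm (count_space UNIV) \<Phi> f powr \<alpha>) (gauge_norm (count_space UNIV) \<Phi> f powr \<beta>)
           \<le> gauge_norm (count_space UNIV) \<Psi> (mazur_map \<Phi> \<Psi> f) \<and>
         gauge_norm (count_space UNIV) \<Psi> (mazur_map \<Phi> \<Psi> f)
           \<le> max (gauge_norm (count_space UNIV) \<Phi> f powr \<alpha>) (gauge_norm (count_space UNIV) \<Phi> f powr \<beta>)))"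
proof -
  have pos: "\<And>t. 0 < t \<Longrightarrow> 0 < \<Psi> t" using assms(2) by (simp add: N_function_def)
  note bounds = gauge_norm_mazur_map_bounds[OF assms(7,8,3,4,5,6) pos, folded \<alpha>_def \<beta>_def]
  show ?thesis by (intro conjI impI allI) (simp_all add: bounds)
qed

end
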